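(* Let $G$ be a finite simple graph with a perfect matching $M$ and let $\mathcal{C}$ be an optimal edge $2$-colouring of $G$; write $\mathrm{cl}(e)$ for the colour of an edge $e$ and $\mathrm{mcl}(u)$ for the colour of the edge of $M$ at vertex $u$. Let $T$ be a rooted tree with $|V(T)|>1$ which is a subgraph of $G\setminus M$, with root $r$ and set of leaves $L$, equipped with a depth-first ordering and the induced total order $\preceq$ (see context). Suppose that for every $u\in L\cup\{r\}$, every edge of $T$ incident with $u$ has colour $\mathrm{mcl}(u)$. Then there is a set $P=\{(u_i,v_i): i=1,\ldots,|L|\}$ of pairs of vertices of $T$ such that: (a) for $i\ne j$, $u_i\ne u_j$; (b) $u_i\prec v_i$ for all $1\le i\le |L|$; (c) $\mathrm{mcl}(u_i)=\mathrm{mcl}(v_i)$ for all $i$; (d) the path $u_iTv_i$ is monochromatic, with all its edges coloured $\mathrm{mcl}(u_i)$, for all $i$; (e) for every internal vertex $z$ of the path $u_iTv_i$, $\mathrm{mcl}(z)\ne \mathrm{mcl}(u_i)$, for all $i$; (f) for $i\ne j$ with $u_iv_i\in M$ and $u_jv_j\in M$, the paths $u_iTv_i$ and $u_jTv_j$ do not share an internal vertex.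
   Context: $G\setminus M$ is the spanning subgraph of $G$ with edge set $E(G)\setminus M$. An edge $2$-colouring assigns colours to edges (not necessarily properly) so that every vertex sees at most $2$ distinct colours on its incident edges; optimal means the number of colours used is maximum. For a rooted tree $T$, the leaves are the non-root vertices with no children. A depth-first ordering of $T$ is an indexing $\mathrm{dfs}_T: V(T)\to\{1,\dots,|V(T)|\}$ obtained from a depth-first traversal from the root, so that if $v$ is a descendant of $u$ then $\mathrm{dfs}_T(u)<\mathrm{dfs}_T(v)$ (the root has the minimum index). The order $\preceq$ on $V(T)$ is defined by $u\preceq v$ iff $\mathrm{dfs}_T(u)\ge \mathrm{dfs}_T(v)$ (so the root is the maximum element); $u\prec v$ means $u\preceq v$ and $u\ne v$. For vertices $x,y$ of $T$, $xTy$ denotes the unique $x$–$y$ path in $T$; its internal vertices are those other than $x,y$. *)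

theory Defs
  imports Main
begin

definition simple_graph :: "'a set \<Rightarrow> 'a set set \<Rightarrow> bool" where
  "simple_graph V E \<longleftrightarrow> finite V \<and> (\<forall>e\<in>E. e \<subseteq> V \<and> card e = 2)"

definition perfect_matching :: "'a set \<Rightarrow> 'a set set \<Rightarrow> 'a set set \<Rightarrow> bool" where
  "perfect_matching V E M \<longleftrightarrow> M \<subseteq> E \<and> (\<forall>v\<in>V. \<exists>!e. e \<in> M \<and> v \<in> e)"

definition edge_2_colouring :: "'a set \<Rightarrow> 'a set set \<Rightarrow> ('a set \<Rightarrow> nat) \<Rightarrow> bool" where
  "edge_2_colouring V E col \<longleftrightarrow> (\<forall>v\<in>V. card (col ` {e\<in>E. v \<in> e}) \<le> 2)"

definition num_colours :: "'a set set \<Rightarrow> ('a set \<Rightarrow> nat) \<Rightarrow> nat" where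
  "num_colours E col = card (col ` E)"

definition optimal_2_colouring :: "'a set \<Rightarrow> 'a set set \<Rightarrow> ('a set \<Rightarrow> nat) \<Rightarrow> bool" where
  "optimal_2_colouring V E col \<longleftrightarrow> edge_2_colouring V E col \<and>
     (\<forall>col'. edge_2_colouring V E col' \<longrightarrow> num_colours E col' \<le> num_colours E col)"

definition mcl :: "'a set set \<Rightarrow> ('a set \<Rightarrow> nat) \<Rightarrow> 'a \<Rightarrow> nat" where
  "mcl M col u = col (THE e. e \<in> M \<and> u \<in> e)"

definition is_walk :: "'a set set \<Rightarrow> 'a list \<Rightarrow> bool" where
  "is_walk F p \<longleftrightarrow> p \<noteq> [] \<and> (\<forall>i. Suc i < length p \<longrightarrow> {p ! i, p ! Suc i} \<in> F)"

definition is_path :: "'a set set \<Rightarrow> 'a list \<Rightarrow> bool" where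
  "is_path F p \<longleftrightarrow> is_walk F p \<and> distinct p"

definition path_edges :: "'a list \<Rightarrow> 'a set set" where
  "path_edges p = {{p ! i, p ! Suc i} | i. Suc i < length p}"

definition internal_vertices :: "'a list \<Rightarrow> 'a set" where
  "internal_vertices p = set (butlast (tl p))"

definition is_cycle :: "'a set set \<Rightarrow> 'a list \<Rightarrow> bool" where
  "is_cycle F p \<longleftrightarrow> is_path F p \<and> length p \<ge> 3 \<and> {last p, hd p} \<in> F"

definition is_tree :: "'a set \<Rightarrow> 'a set set \<Rightarrow> bool" where
  "is_tree VT ET \<longleftrightarrow> VT \<noteq> {} \<and> (\<forall>e\<in>ET. e \<subseteq> VT \<and> card e = 2) \<and>
     (\<forall>x\<in>VT. \<forall>y\<in>VT. \<exists>p. is_path ET p \<and> hd p = x \<and> last p = y) \<and>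
     \<not> (\<exists>p. is_cycle ET p)"

definition tpath :: "'a set set \<Rightarrow> 'a \<Rightarrow> 'a \<Rightarrow> 'a list" where
  "tpath ET x y = (THE p. is_path ET p \<and> hd p = x \<and> last p = y)"

definition descendants :: "'a set \<Rightarrow> 'a set set \<Rightarrow> 'a \<Rightarrow> 'a \<Rightarrow> 'a set" where
  "descendants VT ET r u = {v\<in>VT. u \<in> set (tpath ET r v)}"

definition children :: "'a set \<Rightarrow> 'a set set \<Rightarrow> 'a \<Rightarrow> 'a \<Rightarrow> 'a set" where
  "children VT ET r u = {v \<in> descendants VT ET r u. v \<noteq> u \<and> {u, v} \<in> ET}"

definition leaves :: "'a set \<Rightarrow> 'a set set \<Rightarrow> 'a \<Rightarrow> 'a set" where
  "leaves VT ET r = {v\<in>VT. v \<noteq> r \<and> children VT ET r v = {}}"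

(* depth-first (preorder) ordering: a bijection onto {1..|V(T)|} in which
   every subtree receives a contiguous block of indices starting at its root *)
definition dfs_ordering :: "'a set \<Rightarrow> 'a set set \<Rightarrow> 'a \<Rightarrow> ('a \<Rightarrow> nat) \<Rightarrow> bool" where
  "dfs_ordering VT ET r dfs \<longleftrightarrow> bij_betw dfs VT {1..card VT} \<and>
     (\<forall>u\<in>VT. dfs ` descendants VT ET r u =
        {dfs u ..< dfs u + card (descendants VT ET r u)})"

definition dfs_le :: "('a \<Rightarrow> nat) \<Rightarrow> 'a \<Rightarrow> 'a \<Rightarrow> bool" where
  "dfs_le dfs u v \<longleftrightarrow> dfs u \<ge> dfs v"

definition dfs_less :: "('a \<Rightarrow> nat) \<Rightarrow> 'a \<Rightarrow> 'a \<Rightarrow> bool" where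
  "dfs_less dfs u v \<longleftrightarrow> dfs_le dfs u v \<and> u \<noteq> v"

end

(* A vertex x of T belongs to the component K(x) of all vertices joined to x by a tree path
   coloured mcl(x); its leader is the dfs-first vertex of K(x) with the same matching colour.
   Every vertex u that is not its own leader is paired with the first vertex v after u on the
   path from u to its leader with mcl(v) = mcl(u); properties (b)-(e) are then immediate.
   If two such paths share an internal vertex z, then z sees both path colours on tree edges
   while mcl(z) differs from both, so the colours agree; then u_1 and u_2 lie in one component,
   have the same leader, and both paths continue from z to the same partner, so two matching
   edges would share it.  There are at least |L| non-leaders: sending each leader x that has a
   tree edge of colour mcl(x) to the dfs-first vertex of K(x) is injective (otherwise that
   vertex would see three colours, counting its parent edge, or violate the hypothesis at the
   root) and avoids the leaves, all of which have such an edge. *)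

theory Submission
  imports Defs
begin

lemma is_walk_iff_successively:
  "is_walk F p \<longleftrightarrow> p \<noteq> [] \<and> successively (\<lambda>x y. {x, y} \<in> F) p"
  by (simp add: is_walk_def successively_conv_nth)

lemma is_walk_simps [simp]:
  "\<not> is_walk F []"
  "is_walk F [x]"
  "is_walk F (x # y # xs) \<longleftrightarrow> {x, y} \<in> F \<and> is_walk F (y # xs)"
  by (simp_all add: is_walk_iff_successively)

lemma is_walk_append:
  "is_walk F (xs @ y # ys) \<longleftrightarrow> is_walk F (xs @ [y]) \<and> is_walk F (y # ys)"
  by (induction xs rule: induct_list012) auto

lemma is_walk_rev [simp]: "is_walk F (rev p) \<longleftrightarrow> is_walk F p"
  by (simp add: is_walk_iff_successively insert_commute)

lemma path_edges_conv_image: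
  "path_edges p = (\<lambda>i. {p ! i, p ! Suc i}) ` {..<length p - 1}"
  unfolding path_edges_def by auto

lemma path_edges_simps [simp]:
  "path_edges [] = {}"
  "path_edges [x] = {}"
  "path_edges (x # y # xs) = insert {x, y} (path_edges (y # xs))"
  by (simp_all add: path_edges_conv_image lessThan_Suc_eq_insert_0 image_image)

lemma path_edges_append:
  "path_edges (xs @ y # ys) = path_edges (xs @ [y]) \<union> path_edges (y # ys)"
  by (induction xs rule: induct_list012) auto

lemma path_edges_rev [simp]: "path_edges (rev p) = path_edges p"
proof (induction p rule: induct_list012)
  case (3 x y zs)
  have "path_edges (rev (x # y # zs)) = path_edges (rev zs @ [y]) \<union> path_edges [y, x]"
    using path_edges_append[of "rev zs" y "[x]"] by simp
  moreover have "{y, x} = {x, y}" by blast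
  ultimately show ?case using "3.IH"(2) by simp
qed simp_all

lemma walk_vertices_subset:
  assumes "is_walk F p" "\<forall>e\<in>F. e \<subseteq> S" "hd p \<in> S"
  shows "set p \<subseteq> S"
  using assms
proof (induction p rule: induct_list012)
  case (3 x y zs)
  have "{x, y} \<in> F" "is_walk F (y # zs)" using "3.prems"(1) by simp_all
  moreover have "y \<in> S" using calculation(1) "3.prems"(2) by blast
  ultimately show ?case using "3.IH"(2) "3.prems" by simp
qed simp_all

lemma walk_to_path:
  assumes "is_walk F w"
  shows "\<exists>p. is_path F p \<and> hd p = hd w \<and> last p = last w \<and> set p \<subseteq> set w \<and>
    path_edges p \<subseteq> path_edges w"
  using assms
proof (induction "length w" arbitrary: w rule: less_induct)
  case less
  show ?case
  proof (cases "distinct w")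
    case True
    then show ?thesis using less.prems unfolding is_path_def by blast
  next
    case False
    then obtain xs ys zs y where w: "w = xs @ y # ys @ y # zs"
      using not_distinct_decomp by fastforce
    let ?w' = "xs @ y # zs"
    have "is_walk F (xs @ [y])" "is_walk F ((y # ys) @ y # zs)"
      using less.prems w is_walk_append[of F xs y "ys @ y # zs"] by simp_all
    then have "is_walk F ?w'"
      using is_walk_append[of F "y # ys" y zs] is_walk_append[of F xs y zs] by simp
    moreover have "length ?w' < length w" using w by simp
    ultimately obtain p where p: "is_path F p" "hd p = hd ?w'" "last p = last ?w'"
      "set p \<subseteq> set ?w'" "path_edges p \<subseteq> path_edges ?w'"
      using less.hyps by blast
    have "path_edges ?w' \<subseteq> path_edges w"
      using path_edges_append[of xs y zs] path_edges_append[of xs y "ys @ y # zs"]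
        path_edges_append[of "y # ys" y zs] w by auto
    moreover have "hd ?w' = hd w" "last ?w' = last w" "set ?w' \<subseteq> set w"
      using w by (cases xs; simp; blast)+
    ultimately show ?thesis using p by (metis subset_trans)
  qed
qed

locale tree =
  fixes VT :: "'a set" and ET :: "'a set set"
  assumes is_tree: "is_tree VT ET"
begin

lemma edge_subset: "e \<in> ET \<Longrightarrow> e \<subseteq> VT"
  using is_tree unfolding is_tree_def by blast

lemma edge_ends_distinct: "{x, y} \<in> ET \<Longrightarrow> x \<noteq> y"
  using is_tree unfolding is_tree_def by fastforce

lemma path_unique:
  "is_path ET p \<Longrightarrow> is_path ET q \<Longrightarrow> hd p = hd q \<Longrightarrow> last p = last q \<Longrightarrow> p = q"
proof (induction p arbitrary: q)
  case (Cons x p')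
  obtain q' where q: "q = x # q'"
    using Cons.prems(2,3) unfolding is_path_def by (cases q) auto
  have x: "x \<notin> set p'" "x \<notin> set q'" using Cons.prems(1,2) q unfolding is_path_def by auto
  consider "p' = []" "q' = []" | "p' \<noteq> []" "q' \<noteq> []"
    using Cons.prems(4) q x by (cases "p' = []"; cases "q' = []") auto
  then show ?case
  proof cases
    case 2
    have paths: "is_path ET p'" "is_path ET q'" "last p' = last q'"
      using Cons.prems 2 q unfolding is_path_def
      by (auto simp: neq_Nil_conv)
    show ?thesis
    proof (cases "hd p' = hd q'")
      case True
      then show ?thesis using Cons.IH paths q by simp
    next
      case False
      \<comment> \<open>the first vertex of p' on q' closes a cycle through x\<close>
      obtain as m bs where p': "p' = as @ m # bs" and m: "m \<in> set q'"
        and as: "\<forall>z\<in>set as. z \<notin> set q'"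
        using split_list_first_prop[of p' "\<lambda>z. z \<in> set q'"] paths(3) 2 last_in_set by metis
      obtain us vs where q': "q' = us @ m # vs" using split_list[OF m] by blast
      let ?c = "x # as @ m # rev us"
      have "is_walk ET (x # as @ [m])"
        using Cons.prems(1) p' is_walk_append[of ET "x # as" m bs] unfolding is_path_def by simp
      moreover have "is_walk ET (m # rev us)"
        using paths(2) q' is_walk_append[of ET us m vs] is_walk_rev[of ET "us @ [m]"]
        unfolding is_path_def by simp
      ultimately have "is_walk ET ?c" using is_walk_append[of ET "x # as" m "rev us"] by simp
      moreover have "distinct ?c"
        using Cons.prems(1) paths(2) x as p' q' unfolding is_path_def by auto
      moreover have "as \<noteq> [] \<or> us \<noteq> []" using False p' q' by auto
      then have "length ?c \<ge> 3" by (auto simp: Suc_le_eq)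
      moreover have "{x, hd q'} \<in> ET" using Cons.prems(2) q 2 by (cases q') (auto simp: is_path_def)
      then have "{last ?c, hd ?c} \<in> ET" using q' by (cases us) (auto simp: insert_commute)
      ultimately have "is_cycle ET ?c" unfolding is_cycle_def is_path_def by blast
      then show ?thesis using is_tree unfolding is_tree_def by blast
    qed
  qed (use q in simp)
qed (simp add: is_path_def)

lemma tpath_eq: "is_path ET p \<Longrightarrow> tpath ET (hd p) (last p) = p"
  unfolding tpath_def by (rule the_equality) (auto intro: path_unique)

lemma tpath_spec:
  assumes "x \<in> VT" "y \<in> VT"
  shows "is_path ET (tpath ET x y)" "hd (tpath ET x y) = x" "last (tpath ET x y) = y"
proof -
  obtain p where "is_path ET p" "hd p = x" "last p = y"
    using is_tree assms unfolding is_tree_def by blast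
  then show "is_path ET (tpath ET x y)" "hd (tpath ET x y) = x" "last (tpath ET x y) = y"
    using tpath_eq by metis+
qed

lemma tpath_ne_Nil: "x \<in> VT \<Longrightarrow> y \<in> VT \<Longrightarrow> tpath ET x y \<noteq> []"
  using tpath_spec(1) unfolding is_path_def by fastforce

lemma set_tpath_subset: "x \<in> VT \<Longrightarrow> y \<in> VT \<Longrightarrow> set (tpath ET x y) \<subseteq> VT"
  using tpath_spec walk_vertices_subset edge_subset unfolding is_path_def by metis

lemma tpath_refl: "tpath ET x x = [x]"
  using tpath_eq[of "[x]"] by (simp add: is_path_def)

lemma tpath_edge: "{x, y} \<in> ET \<Longrightarrow> tpath ET x y = [x, y]"
  using tpath_eq[of "[x, y]"] edge_ends_distinct by (simp add: is_path_def)

lemma tpath_rev: "x \<in> VT \<Longrightarrow> y \<in> VT \<Longrightarrow> tpath ET y x = rev (tpath ET x y)"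
  using tpath_eq[of "rev (tpath ET x y)"] tpath_spec[of x y] tpath_ne_Nil[of x y]
  by (simp add: is_path_def hd_rev last_rev)

lemma tpath_split:
  assumes "x \<in> VT" "y \<in> VT" "tpath ET x y = as @ z # bs"
  shows "tpath ET x z = as @ [z]" "tpath ET z y = z # bs"
proof -
  have "is_path ET (as @ z # bs)" "hd (as @ z # bs) = x" "last (as @ z # bs) = y"
    using tpath_spec[OF assms(1,2)] assms(3) by simp_all
  then have "is_path ET (as @ [z])" "is_path ET (z # bs)" "hd (as @ [z]) = x"
    using is_walk_append[of ET as z bs] unfolding is_path_def by (auto simp: hd_append)
  with \<open>last (as @ z # bs) = y\<close> show "tpath ET x z = as @ [z]" "tpath ET z y = z # bs"
    using tpath_eq by (metis last_snoc, metis last_appendR list.discI list.sel(1))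
qed

lemma tpath_first_edge:
  assumes "x \<in> VT" "y \<in> VT" "x \<noteq> y"
  obtains z zs where "tpath ET x y = x # z # zs" "{x, z} \<in> ET"
proof -
  obtain zs where "tpath ET x y = x # zs"
    using tpath_spec(2)[OF assms(1,2)] tpath_ne_Nil[OF assms(1,2)] by (cases "tpath ET x y") auto
  moreover have "zs \<noteq> []" using calculation tpath_spec(3)[OF assms(1,2)] assms(3) by auto
  ultimately show thesis
    using that tpath_spec(1)[OF assms(1,2)] unfolding is_path_def by (cases zs) auto
qed

lemma tpath_trans:
  assumes "x \<in> VT" "y \<in> VT" "z \<in> VT"
  shows "set (tpath ET x z) \<subseteq> set (tpath ET x y) \<union> set (tpath ET y z)"
    and "path_edges (tpath ET x z) \<subseteq> path_edges (tpath ET x y) \<union> path_edges (tpath ET y z)"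
proof -
  obtain as where as: "tpath ET x y = as @ [y]"
    using tpath_spec(3)[OF assms(1,2)] tpath_ne_Nil[OF assms(1,2)]
    by (cases "tpath ET x y" rule: rev_cases) auto
  obtain bs where bs: "tpath ET y z = y # bs"
    using tpath_spec(2)[OF assms(2,3)] tpath_ne_Nil[OF assms(2,3)] by (cases "tpath ET y z") auto
  let ?w = "as @ y # bs"
  have "is_walk ET ?w"
    using is_walk_append[of ET as y bs] tpath_spec(1)[OF assms(1,2)] tpath_spec(1)[OF assms(2,3)] as bs
    unfolding is_path_def by simp
  moreover have "hd ?w = x" "last ?w = z"
    using tpath_spec(2)[OF assms(1,2)] tpath_spec(3)[OF assms(2,3)] as bs by (auto simp: hd_append)
  ultimately obtain p where p: "is_path ET p" "hd p = x" "last p = z" "set p \<subseteq> set ?w"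
    "path_edges p \<subseteq> path_edges ?w"
    using walk_to_path by metis
  then have "tpath ET x z = p" using tpath_eq by metis
  then show "set (tpath ET x z) \<subseteq> set (tpath ET x y) \<union> set (tpath ET y z)"
    and "path_edges (tpath ET x z) \<subseteq> path_edges (tpath ET x y) \<union> path_edges (tpath ET y z)"
    using p(4,5) as bs path_edges_append[of as y bs] by auto
qed

lemma exists_edge:
  assumes "card VT > 1" "x \<in> VT"
  obtains y where "{x, y} \<in> ET"
proof -
  have "\<not> VT \<subseteq> {x}" using assms(1) card_mono[of "{x}" VT] by fastforce
  then obtain y where "y \<in> VT" "y \<noteq> x" by blast
  then show thesis using tpath_first_edge[OF assms(2)] that by metis
qed

definition mono_path :: "('a set \<Rightarrow> 'c) \<Rightarrow> 'c \<Rightarrow> 'a \<Rightarrow> 'a \<Rightarrow> bool" where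
  "mono_path col c x y \<longleftrightarrow> x \<in> VT \<and> y \<in> VT \<and> (\<forall>e\<in>path_edges (tpath ET x y). col e = c)"

lemma mono_path_refl: "x \<in> VT \<Longrightarrow> mono_path col c x x"
  unfolding mono_path_def by (simp add: tpath_refl)

lemma mono_path_sym:
  assumes "mono_path col c x y"
  shows "mono_path col c y x"
proof -
  have "x \<in> VT" "y \<in> VT" using assms unfolding mono_path_def by auto
  then have "path_edges (tpath ET y x) = path_edges (tpath ET x y)" using tpath_rev[of x y] by simp
  then show ?thesis using assms unfolding mono_path_def by simp
qed

lemma mono_path_trans:
  assumes "mono_path col c x y" "mono_path col c y z"
  shows "mono_path col c x z"
proof -
  have xyz: "x \<in> VT" "y \<in> VT" "z \<in> VT" using assms unfolding mono_path_def by auto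
  show ?thesis
    using assms tpath_trans(2)[OF xyz] xyz unfolding mono_path_def by (meson Un_iff subsetD)
qed

lemma mono_path_edge: "{x, y} \<in> ET \<Longrightarrow> col {x, y} = c \<Longrightarrow> mono_path col c x y"
  using edge_subset[of "{x, y}"] unfolding mono_path_def by (simp add: tpath_edge)

lemma mono_path_prefix:
  assumes "mono_path col c x y" "z \<in> set (tpath ET x y)"
  shows "mono_path col c x z"
proof -
  have xy: "x \<in> VT" "y \<in> VT" using assms(1) unfolding mono_path_def by auto
  obtain as bs where split: "tpath ET x y = as @ z # bs" using split_list[OF assms(2)] by blast
  then have "z \<in> VT" using set_tpath_subset[OF xy] by auto
  moreover have "path_edges (tpath ET x z) \<subseteq> path_edges (tpath ET x y)"
    using tpath_split(1)[OF xy split] split path_edges_append[of as z bs] by simp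
  ultimately show ?thesis using assms(1) unfolding mono_path_def by blast
qed

lemma mono_path_first_edge:
  assumes "mono_path col c x y" "x \<noteq> y"
  obtains z where "{x, z} \<in> ET" "col {x, z} = c"
proof -
  have xy: "x \<in> VT" "y \<in> VT" using assms(1) unfolding mono_path_def by auto
  obtain z zs where "tpath ET x y = x # z # zs" "{x, z} \<in> ET"
    using tpath_first_edge[OF xy assms(2)] by blast
  then show thesis using that assms(1) unfolding mono_path_def by simp
qed

end

locale dfs_tree = tree +
  fixes r :: 'a and dfs :: "'a \<Rightarrow> nat"
  assumes root: "r \<in> VT"
    and dfs: "dfs_ordering VT ET r dfs"
begin

lemma dfs_neq: "x \<in> VT \<Longrightarrow> y \<in> VT \<Longrightarrow> x \<noteq> y \<Longrightarrow> dfs x \<noteq> dfs y"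
  using dfs unfolding dfs_ordering_def bij_betw_def by (meson inj_on_contraD)

lemma dfs_ancestor_le:
  assumes "u \<in> VT" "w \<in> set (tpath ET r u)"
  shows "dfs w \<le> dfs u"
proof -
  have "w \<in> VT" using set_tpath_subset[OF root assms(1)] assms(2) by blast
  moreover have "u \<in> descendants VT ET r w" unfolding descendants_def using assms by blast
  ultimately show ?thesis using dfs unfolding dfs_ordering_def by (metis atLeastLessThan_iff imageI)
qed

lemma dfs_ancestor_less:
  assumes "u \<in> VT" "w \<in> set (tpath ET r u)" "w \<noteq> u"
  shows "dfs w < dfs u"
proof -
  have "w \<in> VT" using set_tpath_subset[OF root assms(1)] assms(2) by blast
  then have "dfs w \<noteq> dfs u" using dfs_neq assms(1,3) by blast
  then show ?thesis using dfs_ancestor_le[OF assms(1,2)] by simp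
qed

lemma exists_parent:
  assumes "t \<in> VT" "t \<noteq> r"
  obtains p where "{p, t} \<in> ET" "dfs p < dfs t"
proof -
  obtain p ps where path: "tpath ET t r = t # p # ps" and edge: "{t, p} \<in> ET"
    using tpath_first_edge[OF assms(1) root assms(2)] by blast
  then have "p \<in> set (tpath ET r t)" "p \<noteq> t"
    using tpath_rev[OF assms(1) root] tpath_spec(1)[OF assms(1) root] unfolding is_path_def by auto
  then have "dfs p < dfs t" using dfs_ancestor_less[OF assms(1)] by blast
  then show thesis using that edge by (simp add: insert_commute)
qed

lemma edge_ancestor:
  assumes "{a, b} \<in> ET"
  shows "a \<in> set (tpath ET r b) \<or> b \<in> set (tpath ET r a)"
proof (rule disjCI)
  assume b: "b \<notin> set (tpath ET r a)"
  have ab: "a \<in> VT" "b \<in> VT" using edge_subset[OF assms] by auto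
  obtain as where as: "tpath ET r a = as @ [a]"
    using tpath_spec(3)[OF root ab(1)] tpath_ne_Nil[OF root ab(1)]
    by (cases "tpath ET r a" rule: rev_cases) auto
  have "is_path ET (as @ a # [b])"
    using tpath_spec(1)[OF root ab(1)] as b assms is_walk_append[of ET as a "[b]"]
      edge_ends_distinct[OF assms]
    unfolding is_path_def by simp
  moreover have "hd (as @ [a, b]) = r" using tpath_spec(2)[OF root ab(1)] as by (cases as) auto
  ultimately have "tpath ET r b = as @ [a, b]" using tpath_eq by fastforce
  then show "a \<in> set (tpath ET r b)" by simp
qed

lemma not_leaf_if_later_neighbour:
  assumes "{t, y} \<in> ET" "dfs t < dfs y"
  shows "t \<notin> leaves VT ET r"
proof -
  have ty: "t \<in> VT" "y \<in> VT" using edge_subset[OF assms(1)] by auto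
  have "y \<notin> set (tpath ET r t)" using dfs_ancestor_le[OF ty(1)] assms(2) by fastforce
  then have "t \<in> set (tpath ET r y)" using edge_ancestor[OF assms(1)] by blast
  then have "y \<in> children VT ET r t"
    unfolding children_def descendants_def using ty assms(1) edge_ends_distinct by auto
  then show ?thesis unfolding leaves_def by blast
qed

lemma dfs_tpath_less:
  assumes "u \<in> VT" "s \<in> VT" "dfs s < dfs u" "w \<in> set (tpath ET u s)" "w \<noteq> u"
  shows "dfs w < dfs u"
proof -
  have "w \<in> set (tpath ET r u) \<or> w \<in> set (tpath ET r s)"
    using tpath_trans(1)[OF assms(1) root assms(2)] tpath_rev[OF root assms(1)] assms(4) by auto
  then show ?thesis
    using dfs_ancestor_less[OF assms(1) _ assms(5)] dfs_ancestor_le[OF assms(2)] assms(3) by fastforce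
qed

end

locale coloured_dfs_tree = dfs_tree VT ET r dfs
  for VT :: "'a set" and ET :: "'a set set" and r :: 'a and dfs :: "'a \<Rightarrow> nat" +
  fixes V :: "'a set" and E M :: "'a set set" and col :: "'a set \<Rightarrow> nat"
  assumes simple: "simple_graph V E"
    and matching: "perfect_matching V E M"
    and colouring: "edge_2_colouring V E col"
    and VT_subset: "VT \<subseteq> V"
    and ET_subset: "ET \<subseteq> E"
    and nontrivial: "card VT > 1"
    and ends_coloured: "\<forall>u \<in> leaves VT ET r \<union> {r}. \<forall>e\<in>ET. u \<in> e \<longrightarrow> col e = mcl M col u"
begin

abbreviation mc :: "'a \<Rightarrow> nat" where
  "mc \<equiv> mcl M col"

lemma at_most_two_colours:
  assumes "e1 \<in> E" "e2 \<in> E" "e3 \<in> E" "z \<in> e1" "z \<in> e2" "z \<in> e3"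
  shows "col e1 = col e2 \<or> col e1 = col e3 \<or> col e2 = col e3"
proof (rule ccontr)
  assume distinct: "\<not> ?thesis"
  have "finite E" using simple finite_subset[of E "Pow V"] unfolding simple_graph_def by auto
  moreover have "z \<in> V" using simple assms(1,4) unfolding simple_graph_def by blast
  ultimately have "card (col ` {e \<in> E. z \<in> e}) \<le> 2" "finite (col ` {e \<in> E. z \<in> e})"
    using colouring unfolding edge_2_colouring_def by auto
  moreover have "{col e1, col e2, col e3} \<subseteq> col ` {e \<in> E. z \<in> e}" using assms by blast
  ultimately have "card {col e1, col e2, col e3} \<le> 2" by (meson card_mono order_trans)
  then show False using distinct by (simp add: card_insert_if)
qed

lemma matching_edge:
  assumes "z \<in> V"
  obtains e where "e \<in> E" "z \<in> e" "col e = mc z"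
proof -
  have "\<exists>!e. e \<in> M \<and> z \<in> e" using matching assms unfolding perfect_matching_def by blast
  then have "(THE e. e \<in> M \<and> z \<in> e) \<in> M" "z \<in> (THE e. e \<in> M \<and> z \<in> e)"
    using theI' by (metis (no_types, lifting))+
  then show thesis using that matching unfolding perfect_matching_def mcl_def by blast
qed

lemma mcl_in_edge_colours:
  assumes "e1 \<in> ET" "e2 \<in> ET" "z \<in> e1" "z \<in> e2" "col e1 \<noteq> col e2"
  shows "mc z = col e1 \<or> mc z = col e2"
proof -
  have "z \<in> V" using assms(1,3) edge_subset VT_subset by blast
  then obtain e where "e \<in> E" "z \<in> e" "col e = mc z" by (rule matching_edge)
  moreover have "e1 \<in> E" "e2 \<in> E" using assms(1,2) ET_subset by auto
  ultimately show ?thesis using at_most_two_colours[of e1 e2 e z] assms(3-5) by auto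
qed

lemma matching_partner_unique:
  assumes "{a, b} \<in> M" "{a, c} \<in> M"
  shows "b = c"
proof -
  have "{a, b} \<in> E" using assms(1) matching unfolding perfect_matching_def by blast
  then have "a \<in> V" "card {a, b} = 2" using simple unfolding simple_graph_def by auto
  then have "{a, b} = {a, c}" "a \<noteq> b"
    using assms matching unfolding perfect_matching_def by (blast, auto)
  then show ?thesis by (metis doubleton_eq_iff)
qed

definition has_mcl_edge :: "'a \<Rightarrow> bool" where
  "has_mcl_edge x \<longleftrightarrow> (\<exists>y. {x, y} \<in> ET \<and> col {x, y} = mc x)"

definition mono_comp :: "'a \<Rightarrow> 'a set" where
  "mono_comp x = {y. mono_path col (mc x) x y}"

definition leader :: "'a \<Rightarrow> 'a" where
  "leader x = arg_min_on dfs {y \<in> mono_comp x. mc y = mc x}"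

definition comp_root :: "'a \<Rightarrow> 'a" where
  "comp_root x = arg_min_on dfs (mono_comp x)"

lemma has_mcl_edge_in_VT: "has_mcl_edge x \<Longrightarrow> x \<in> VT"
  unfolding has_mcl_edge_def using edge_subset by blast

lemma finite_VT: "finite VT"
  using nontrivial by (intro card_ge_0_finite) simp

lemma finite_mono_comp: "finite (mono_comp x)"
proof -
  note finite_VT
  moreover have "mono_comp x \<subseteq> VT" unfolding mono_comp_def mono_path_def by blast
  ultimately show ?thesis by (rule finite_subset[rotated])
qed

lemma self_in_mono_comp: "x \<in> VT \<Longrightarrow> x \<in> mono_comp x"
  unfolding mono_comp_def by (simp add: mono_path_refl)

lemma mono_comp_eq:
  assumes "y \<in> mono_comp x" "mc y = mc x"
  shows "mono_comp y = mono_comp x" "leader y = leader x"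
proof -
  have xy: "mono_path col (mc x) x y" using assms(1) unfolding mono_comp_def by simp
  have "mono_path col (mc x) y z \<longleftrightarrow> mono_path col (mc x) x z" for z
    using mono_path_trans[OF xy] mono_path_trans[OF mono_path_sym[OF xy]] by blast
  then show "mono_comp y = mono_comp x" unfolding mono_comp_def using assms(2) by auto
  then show "leader y = leader x" unfolding leader_def using assms(2) by simp
qed

lemma leader_spec:
  assumes "x \<in> VT"
  shows "leader x \<in> mono_comp x" "mc (leader x) = mc x"
    and "y \<in> mono_comp x \<Longrightarrow> mc y = mc x \<Longrightarrow> dfs (leader x) \<le> dfs y"
proof -
  let ?S = "{y \<in> mono_comp x. mc y = mc x}"
  have S: "finite ?S" "?S \<noteq> {}" using finite_mono_comp self_in_mono_comp[OF assms] by auto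
  have "leader x \<in> ?S" unfolding leader_def by (rule arg_min_if_finite(1)[OF S])
  then show "leader x \<in> mono_comp x" "mc (leader x) = mc x" by simp_all
  show "dfs (leader x) \<le> dfs y" if "y \<in> mono_comp x" "mc y = mc x"
    unfolding leader_def by (rule arg_min_least[OF S]) (use that in simp)
qed

lemma comp_root_spec:
  assumes "x \<in> VT"
  shows "comp_root x \<in> mono_comp x" and "y \<in> mono_comp x \<Longrightarrow> dfs (comp_root x) \<le> dfs y"
proof -
  have S: "finite (mono_comp x)" "mono_comp x \<noteq> {}"
    using finite_mono_comp self_in_mono_comp[OF assms] by auto
  show "comp_root x \<in> mono_comp x" unfolding comp_root_def by (rule arg_min_if_finite(1)[OF S])
  show "y \<in> mono_comp x \<Longrightarrow> dfs (comp_root x) \<le> dfs y"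
    unfolding comp_root_def by (rule arg_min_least[OF S])
qed

lemma has_mcl_edge_if_not_leader:
  assumes "x \<in> VT" "leader x \<noteq> x"
  shows "has_mcl_edge x"
proof -
  have "mono_path col (mc x) x (leader x)" using leader_spec(1)[OF assms(1)] unfolding mono_comp_def by simp
  then show ?thesis unfolding has_mcl_edge_def using assms(2) by (metis mono_path_first_edge)
qed

lemma comp_root_down_edge:
  assumes "has_mcl_edge x"
  obtains y where "{comp_root x, y} \<in> ET" "col {comp_root x, y} = mc x" "dfs (comp_root x) < dfs y"
proof -
  let ?t = "comp_root x"
  have x: "x \<in> VT" using assms by (rule has_mcl_edge_in_VT)
  have t: "mono_path col (mc x) x ?t" using comp_root_spec(1)[OF x] unfolding mono_comp_def by simp
  obtain y0 where y0: "{x, y0} \<in> ET" "col {x, y0} = mc x" using assms unfolding has_mcl_edge_def by blast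
  have tx: "mono_path col (mc x) ?t x" using mono_path_sym[OF t] .
  have ty0: "mono_path col (mc x) ?t y0"
    using mono_path_trans[OF tx mono_path_edge[of _ _ col, OF y0]] .
  have "x \<noteq> y0" using edge_ends_distinct y0(1) by blast
  then have "mono_path col (mc x) ?t (if x = ?t then y0 else x)" "?t \<noteq> (if x = ?t then y0 else x)"
    using tx ty0 by auto
  then obtain y where y: "{?t, y} \<in> ET" "col {?t, y} = mc x" by (rule mono_path_first_edge)
  then have "y \<in> mono_comp x"
    using mono_path_trans[OF t mono_path_edge[of _ _ col, OF y]] unfolding mono_comp_def by simp
  then have "dfs ?t \<le> dfs y" by (rule comp_root_spec(2)[OF x])
  moreover have "dfs ?t \<noteq> dfs y"
    using dfs_neq edge_subset[OF y(1)] edge_ends_distinct[OF y(1)] by simp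
  ultimately show thesis using that y by simp
qed

lemma comp_root_up_edge:
  assumes "x \<in> VT" "{p, comp_root x} \<in> ET" "dfs p < dfs (comp_root x)"
  shows "col {p, comp_root x} \<noteq> mc x"
proof
  assume "col {p, comp_root x} = mc x"
  then have "mono_path col (mc x) (comp_root x) p"
    using assms(2) mono_path_edge[of "comp_root x" p col] by (simp add: insert_commute)
  moreover have "mono_path col (mc x) x (comp_root x)"
    using comp_root_spec(1)[OF assms(1)] unfolding mono_comp_def by simp
  ultimately have "p \<in> mono_comp x" using mono_path_trans unfolding mono_comp_def by simp
  then have "dfs (comp_root x) \<le> dfs p" by (rule comp_root_spec(2)[OF assms(1)])
  then show False using assms(3) by simp
qed

lemma comp_root_not_leaf: "has_mcl_edge x \<Longrightarrow> comp_root x \<notin> leaves VT ET r"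
  by (metis comp_root_down_edge not_leaf_if_later_neighbour)

lemma comp_root_has_mcl_edge:
  assumes "has_mcl_edge x"
  shows "has_mcl_edge (comp_root x)"
proof -
  let ?t = "comp_root x"
  have x: "x \<in> VT" using assms by (rule has_mcl_edge_in_VT)
  obtain y where y: "{?t, y} \<in> ET" "col {?t, y} = mc x" using comp_root_down_edge[OF assms] by blast
  show ?thesis
  proof (cases "?t = r")
    case True
    then show ?thesis using ends_coloured y(1) unfolding has_mcl_edge_def by blast
  next
    case False
    have "?t \<in> VT" using edge_subset[OF y(1)] by simp
    then obtain p where p: "{p, ?t} \<in> ET" "dfs p < dfs ?t" using exists_parent False by blast
    have "col {p, ?t} \<noteq> mc x" using comp_root_up_edge[OF x p] .
    then have "mc ?t = mc x \<or> mc ?t = col {p, ?t}"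
      using mcl_in_edge_colours[OF y(1) p(1)] y(2) by auto
    then show ?thesis unfolding has_mcl_edge_def using y p by (metis insert_commute)
  qed
qed

lemma comp_root_inj_on_leaders:
  assumes "has_mcl_edge x1" "has_mcl_edge x2" "leader x1 = x1" "leader x2 = x2"
    and root_eq: "comp_root x1 = comp_root x2"
  shows "x1 = x2"
proof (cases "mc x1 = mc x2")
  case True
  have x12: "mono_path col (mc x1) x1 (comp_root x1)" "mono_path col (mc x1) x2 (comp_root x1)"
    using comp_root_spec(1)[OF has_mcl_edge_in_VT[OF assms(1)]]
      comp_root_spec(1)[OF has_mcl_edge_in_VT[OF assms(2)]] root_eq True
    unfolding mono_comp_def by simp_all
  have "x2 \<in> mono_comp x1"
    using mono_path_trans[OF x12(1) mono_path_sym[OF x12(2)]] unfolding mono_comp_def by simp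
  then show ?thesis using mono_comp_eq(2) True assms(3,4) by metis
next
  case False
  let ?t = "comp_root x1"
  obtain y1 where y1: "{?t, y1} \<in> ET" "col {?t, y1} = mc x1" using comp_root_down_edge[OF assms(1)] by blast
  obtain y2 where y2: "{?t, y2} \<in> ET" "col {?t, y2} = mc x2"
    using comp_root_down_edge[OF assms(2)] root_eq by metis
  show ?thesis
  proof (cases "?t = r")
    case True
    then show ?thesis using ends_coloured y1 y2 False by auto
  next
    case not_root: False
    have "?t \<in> VT" using edge_subset[OF y1(1)] by simp
    then obtain p where p: "{p, ?t} \<in> ET" "dfs p < dfs ?t" using exists_parent not_root by blast
    have "col {p, ?t} \<noteq> mc x1" "col {p, ?t} \<noteq> mc x2"
      using comp_root_up_edge[OF has_mcl_edge_in_VT[OF assms(1)] p]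
        comp_root_up_edge[OF has_mcl_edge_in_VT[OF assms(2)]] p root_eq by auto
    then show ?thesis
      using at_most_two_colours[of "{?t, y1}" "{?t, y2}" "{p, ?t}" ?t] y1 y2 p False ET_subset by auto
  qed
qed

lemma leaf_has_mcl_edge:
  assumes "l \<in> leaves VT ET r"
  shows "has_mcl_edge l"
proof -
  have "l \<in> VT" using assms unfolding leaves_def by blast
  then obtain y where "{l, y} \<in> ET" using nontrivial exists_edge by blast
  then show ?thesis unfolding has_mcl_edge_def using ends_coloured assms by blast
qed

lemma card_leaves_le: "card (leaves VT ET r) \<le> card {u \<in> VT. leader u \<noteq> u}"
proof -
  let ?H = "{x. has_mcl_edge x}" and ?L = "leaves VT ET r"
  let ?N = "{x. has_mcl_edge x \<and> leader x = x}"
  have fin: "finite ?H" using finite_VT has_mcl_edge_in_VT by (metis finite_subset mem_Collect_eq subsetI)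
  have L: "?L \<subseteq> ?H" using leaf_has_mcl_edge by blast
  have N: "?N \<subseteq> ?H" by blast
  have "inj_on comp_root ?N" using comp_root_inj_on_leaders by (blast intro: inj_onI)
  then have "card ?N = card (comp_root ` ?N)" by (simp add: card_image)
  also have "\<dots> \<le> card (?H - ?L)"
    using comp_root_not_leaf comp_root_has_mcl_edge fin by (intro card_mono) auto
  also have "\<dots> = card ?H - card ?L" using card_Diff_subset[OF finite_subset[OF L fin] L] .
  finally have "card ?N \<le> card ?H - card ?L" .
  moreover have "{u \<in> VT. leader u \<noteq> u} = ?H - ?N"
    using has_mcl_edge_if_not_leader has_mcl_edge_in_VT by blast
  then have "card {u \<in> VT. leader u \<noteq> u} = card ?H - card ?N"
    using card_Diff_subset[OF finite_subset[OF N fin] N] by simp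
  moreover have "card ?L \<le> card ?H" using card_mono[OF fin L] .
  ultimately show ?thesis by linarith
qed

definition partner :: "'a \<Rightarrow> 'a" where
  "partner u = hd (dropWhile (\<lambda>z. mc z \<noteq> mc u) (tl (tpath ET u (leader u))))"

lemma leader_path_decomp:
  assumes "u \<in> VT" "leader u \<noteq> u"
  obtains xs ys where "tpath ET u (leader u) = u # xs @ partner u # ys"
    and "\<forall>z\<in>set xs. mc z \<noteq> mc u" and "mc (partner u) = mc u"
proof -
  let ?s = "leader u"
  have s: "?s \<in> VT" "mc ?s = mc u"
    using leader_spec(1,2)[OF assms(1)] unfolding mono_comp_def mono_path_def by auto
  obtain rest where path: "tpath ET u ?s = u # rest"
    using tpath_spec(2)[OF assms(1) s(1)] tpath_ne_Nil[OF assms(1) s(1)]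
    by (cases "tpath ET u ?s") auto
  then have "rest \<noteq> []" "last rest = ?s"
    using tpath_spec(3)[OF assms(1) s(1)] assms(2) by (auto split: if_splits)
  then have "\<exists>z\<in>set rest. mc z = mc u" using s(2) last_in_set by metis
  then obtain xs v ys where rest: "rest = xs @ v # ys" "mc v = mc u" "\<forall>z\<in>set xs. \<not> mc z = mc u"
    using split_list_first_prop[of rest "\<lambda>z. mc z = mc u"] by blast
  then have "partner u = v" unfolding partner_def path by simp
  then show thesis using that path rest by simp
qed

lemma partner_spec:
  assumes "u \<in> VT" "leader u \<noteq> u"
  shows "partner u \<in> VT" "dfs_less dfs u (partner u)" "mc (partner u) = mc u"
    and "\<forall>e\<in>path_edges (tpath ET u (partner u)). col e = mc u"
    and "\<forall>z\<in>internal_vertices (tpath ET u (partner u)). mc z \<noteq> mc u"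
proof -
  let ?s = "leader u" and ?v = "partner u"
  obtain xs ys where decomp: "tpath ET u ?s = u # xs @ ?v # ys"
    and xs: "\<forall>z\<in>set xs. mc z \<noteq> mc u" and v: "mc ?v = mc u"
    by (rule leader_path_decomp[OF assms])
  have mono: "mono_path col (mc u) u ?s" using leader_spec(1)[OF assms(1)] unfolding mono_comp_def by simp
  then have s: "?s \<in> VT" unfolding mono_path_def by simp
  have v_on_path: "?v \<in> set (tpath ET u ?s)" using decomp by simp
  then show "?v \<in> VT" using set_tpath_subset[OF assms(1) s] by blast
  have prefix: "tpath ET u ?v = u # xs @ [?v]"
    using tpath_split(1)[OF assms(1) s, of "u # xs" ?v ys] decomp by simp
  have "?v \<noteq> u" using tpath_spec(1)[OF assms(1) s] decomp unfolding is_path_def by auto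
  moreover have "dfs ?s < dfs u"
    using leader_spec(3)[OF assms(1) self_in_mono_comp[OF assms(1)]] dfs_neq[OF s assms(1,2)] by simp
  then have "dfs ?v < dfs u" using dfs_tpath_less[OF assms(1) s _ v_on_path] calculation by blast
  ultimately show "dfs_less dfs u ?v" unfolding dfs_less_def dfs_le_def by simp
  show "mc ?v = mc u" by (rule v)
  have "path_edges (tpath ET u ?v) \<subseteq> path_edges (tpath ET u ?s)"
    using prefix decomp path_edges_append[of "u # xs" ?v ys] by simp
  then show "\<forall>e\<in>path_edges (tpath ET u ?v). col e = mc u" using mono unfolding mono_path_def by blast
  show "\<forall>z\<in>internal_vertices (tpath ET u ?v). mc z \<noteq> mc u"
    using xs prefix by (simp add: internal_vertices_def)
qed

lemma partner_internal:
  assumes "u \<in> VT" "leader u \<noteq> u" "z \<in> internal_vertices (tpath ET u (partner u))"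
  shows "mono_path col (mc u) u z" "z \<noteq> u"
    and "partner u = hd (dropWhile (\<lambda>w. mc w \<noteq> mc u) (tl (tpath ET z (leader u))))"
proof -
  let ?s = "leader u" and ?v = "partner u"
  obtain xs ys where decomp: "tpath ET u ?s = u # xs @ ?v # ys"
    and xs: "\<forall>z\<in>set xs. mc z \<noteq> mc u" and v: "mc ?v = mc u"
    by (rule leader_path_decomp[OF assms(1,2)])
  have mono: "mono_path col (mc u) u ?s" using leader_spec(1)[OF assms(1)] unfolding mono_comp_def by simp
  then have s: "?s \<in> VT" unfolding mono_path_def by simp
  have "tpath ET u ?v = u # xs @ [?v]"
    using tpath_split(1)[OF assms(1) s, of "u # xs" ?v ys] decomp by simp
  then have "z \<in> set xs" using assms(3) by (simp add: internal_vertices_def)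
  then obtain as bs where "xs = as @ z # bs" by (meson split_list)
  then have split: "tpath ET u ?s = (u # as) @ z # (bs @ ?v # ys)" using decomp by simp
  then show "mono_path col (mc u) u z" using mono_path_prefix[OF mono] by simp
  show "z \<noteq> u" using tpath_spec(1)[OF assms(1) s] split unfolding is_path_def by auto
  have "tpath ET z ?s = z # bs @ ?v # ys" by (rule tpath_split(2)[OF assms(1) s split])
  then show "?v = hd (dropWhile (\<lambda>w. mc w \<noteq> mc u) (tl (tpath ET z ?s)))"
    using xs v \<open>xs = as @ z # bs\<close> by simp
qed

lemma partner_paths_disjoint:
  assumes "u1 \<in> VT" "leader u1 \<noteq> u1" "u2 \<in> VT" "leader u2 \<noteq> u2" "u1 \<noteq> u2"
    and "{u1, partner u1} \<in> M" "{u2, partner u2} \<in> M"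
  shows "internal_vertices (tpath ET u1 (partner u1)) \<inter> internal_vertices (tpath ET u2 (partner u2)) = {}"
proof (rule ccontr)
  assume "\<not> ?thesis"
  then obtain z where z1: "z \<in> internal_vertices (tpath ET u1 (partner u1))"
    and z2: "z \<in> internal_vertices (tpath ET u2 (partner u2))" by blast
  note in1 = partner_internal[OF assms(1,2) z1] and in2 = partner_internal[OF assms(3,4) z2]
  obtain w1 where w1: "{z, w1} \<in> ET" "col {z, w1} = mc u1"
    using mono_path_first_edge[OF mono_path_sym[OF in1(1)]] in1(2) by metis
  obtain w2 where w2: "{z, w2} \<in> ET" "col {z, w2} = mc u2"
    using mono_path_first_edge[OF mono_path_sym[OF in2(1)]] in2(2) by metis
  have "mc z \<noteq> mc u1" "mc z \<noteq> mc u2"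
    using partner_spec(5)[OF assms(1,2)] partner_spec(5)[OF assms(3,4)] z1 z2 by auto
  then have same: "mc u1 = mc u2" using mcl_in_edge_colours[OF w1(1) w2(1)] w1(2) w2(2) by auto
  then have "u2 \<in> mono_comp u1"
    using mono_path_trans[OF in1(1) mono_path_sym[OF in2(1)[folded same]]] unfolding mono_comp_def by simp
  then have "leader u2 = leader u1" using mono_comp_eq(2) same by simp
  then have "partner u1 = partner u2" using in1(3) in2(3) same by simp
  then have "u1 = u2"
    using assms(6,7) matching_partner_unique[of "partner u1" u1 u2] by (simp add: insert_commute)
  then show False using assms(5) by simp
qed

end

theorem lemma2:
  fixes V :: "'a set" and E M :: "'a set set" and col :: "'a set \<Rightarrow> nat"
    and VT :: "'a set" and ET :: "'a set set" and r :: 'a and dfs :: "'a \<Rightarrow> nat"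
  assumes G: "simple_graph V E"
    and M: "perfect_matching V E M"
    and C: "optimal_2_colouring V E col"
    and T_sub: "VT \<subseteq> V" "ET \<subseteq> E - M"
    and T_tree: "is_tree VT ET"
    and T_big: "card VT > 1"
    and root: "r \<in> VT"
    and dfs: "dfs_ordering VT ET r dfs"
    and hyp: "\<forall>u \<in> leaves VT ET r \<union> {r}. \<forall>e\<in>ET. u \<in> e \<longrightarrow> col e = mcl M col u"
  shows "\<exists>u v :: nat \<Rightarrow> 'a.
     (\<forall>i\<in>{1..card (leaves VT ET r)}. u i \<in> VT \<and> v i \<in> VT) \<and>
     inj_on u {1..card (leaves VT ET r)} \<and>
     (\<forall>i\<in>{1..card (leaves VT ET r)}.
        dfs_less dfs (u i) (v i) \<and>
        mcl M col (u i) = mcl M col (v i) \<and>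
        (\<forall>e\<in>path_edges (tpath ET (u i) (v i)). col e = mcl M col (u i)) \<and>
        (\<forall>z\<in>internal_vertices (tpath ET (u i) (v i)). mcl M col z \<noteq> mcl M col (u i))) \<and>
     (\<forall>i\<in>{1..card (leaves VT ET r)}. \<forall>j\<in>{1..card (leaves VT ET r)}.
        i \<noteq> j \<and> {u i, v i} \<in> M \<and> {u j, v j} \<in> M \<longrightarrow>
        internal_vertices (tpath ET (u i) (v i)) \<inter> internal_vertices (tpath ET (u j) (v j)) = {})"
proof -
  interpret coloured_dfs_tree VT ET r dfs V E M col
    using T_tree root dfs G M C T_sub T_big hyp
    by unfold_locales (auto simp: optimal_2_colouring_def)
  let ?I = "{1..card (leaves VT ET r)}"
  have "card ?I \<le> card {u \<in> VT. leader u \<noteq> u}" using card_leaves_le by simp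
  then obtain f where f: "f ` ?I \<subseteq> {u \<in> VT. leader u \<noteq> u}" "inj_on f ?I"
    using card_le_inj[of ?I "{u \<in> VT. leader u \<noteq> u}"] finite_VT by auto
  then have good: "f i \<in> VT" "leader (f i) \<noteq> f i" if "i \<in> ?I" for i
    using that by blast+
  have disjoint: "internal_vertices (tpath ET (f i) (partner (f i))) \<inter>
      internal_vertices (tpath ET (f j) (partner (f j))) = {}"
    if "i \<in> ?I" "j \<in> ?I" "i \<noteq> j" "{f i, partner (f i)} \<in> M" "{f j, partner (f j)} \<in> M" for i j
    using partner_paths_disjoint good that f(2) by (simp add: inj_on_eq_iff)
  show ?thesis
    using f(2) good partner_spec disjoint by (intro exI[of _ f] exI[of _ "partner \<circ> f"]) simp
qed

end
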